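(* Let $\Delta\subset M_\mathbb{R}$ be a reflexive polytope with $\dim\Delta=\dim M_\mathbb{R}$, let $\{\Delta_1,\dots,\Delta_s\}$ be a nef-partition of $\Delta$ and $\{\nabla_1,\dots,\nabla_s\}$ its dual nef-partition. Let $p_i\in\nabla_i$ ($1\le i\le s$) with $\sum_{i=1}^sp_i=0$ and $\dim_\mathbb{R}\operatorname{Span}_\mathbb{R}\{p_1,\dots,p_s\}=s-r$. Then there exist pairwise disjoint nonempty sets $I_1,\dots,I_r$ with $\coprod_{k=1}^rI_k=\{1,\dots,s\}$ such that $\sum_{i\in I_k}p_i=0$ for each $k$. *)

theory Defs
  imports "HOL-Analysis.Analysis"
begin

text \<open>We model M_R = real^'n with lattice M = integer points, and identify
  N_R with real^'n via the standard inner product (the pairing of M and N).\<close>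

definition lattice_point :: "real ^ 'n \<Rightarrow> bool" where
  "lattice_point x \<longleftrightarrow> (\<forall>i. x $ i \<in> \<int>)"

definition lattice_polytope :: "(real ^ 'n) set \<Rightarrow> bool" where
  "lattice_polytope P \<longleftrightarrow>
     (\<exists>V. finite V \<and> V \<noteq> {} \<and> (\<forall>v\<in>V. lattice_point v) \<and> P = convex hull V)"

definition polar_dual :: "(real ^ 'n) set \<Rightarrow> (real ^ 'n) set" where
  "polar_dual P = {y. \<forall>x\<in>P. x \<bullet> y \<ge> -1}"

definition reflexive_polytope :: "(real ^ 'n) set \<Rightarrow> bool" where
  "reflexive_polytope P \<longleftrightarrow>
     lattice_polytope P \<and> 0 \<in> interior P \<and> lattice_polytope (polar_dual P)"

definition minkowski_sum_family :: "nat \<Rightarrow> (nat \<Rightarrow> (real ^ 'n) set) \<Rightarrow> (real ^ 'n) set" where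
  "minkowski_sum_family s D = {(\<Sum>i\<in>{1..s}. x i) | x. \<forall>i\<in>{1..s}. x i \<in> D i}"

definition nef_partition :: "(real ^ 'n) set \<Rightarrow> nat \<Rightarrow> (nat \<Rightarrow> (real ^ 'n) set) \<Rightarrow> bool" where
  "nef_partition \<Delta> s D \<longleftrightarrow> 1 \<le> s \<and>
     (\<forall>i\<in>{1..s}. lattice_polytope (D i) \<and> 0 \<in> D i) \<and>
     \<Delta> = minkowski_sum_family s D"

definition dual_nef_partition :: "nat \<Rightarrow> (nat \<Rightarrow> (real ^ 'n) set) \<Rightarrow> (nat \<Rightarrow> (real ^ 'n) set) \<Rightarrow> bool" where
  "dual_nef_partition s D N \<longleftrightarrow>
     (\<forall>i\<in>{1..s}. N i = {y. \<forall>j\<in>{1..s}. \<forall>x\<in>D j. x \<bullet> y \<ge> - (if i = j then 1 else 0)})"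

end

theory Submission
  imports Defs
begin

text \<open>Call a set \<open>W \<subseteq> {1..s}\<close> of indices decoupled if \<open>\<langle>y, p i\<rangle> = 0\<close> whenever
  \<open>y \<in> \<Delta>\<^sub>j\<close>, \<open>j \<in> W\<close> and \<open>i \<notin> W\<close>. Because \<open>\<langle>y, p i\<rangle> \<ge> 0\<close> for \<open>y \<in> \<Delta>\<^sub>j\<close>, \<open>j \<noteq> i\<close>, and the
  \<open>p i\<close> sum to zero, \<open>W\<close> is decoupled iff \<open>\<Sum>\<^sub>i\<^sub>\<in>\<^sub>W p i = 0\<close>; that a decoupled set has zero sum
  uses that the origin is interior to \<open>\<Delta>\<close>. Decoupled sets are closed under complements and
  intersections, so the minimal ones (blocks) partition \<open>{1..s}\<close>. A minimum argument shows that
  every linear relation among the \<open>p i\<close> has constant coefficients on each block, so the span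
  has dimension \<open>s\<close> minus the number of blocks. Hence there are exactly \<open>r\<close> blocks, and they
  form the required partition.\<close>

lemma partition_on_block_eq:
  assumes "partition_on A P" "B \<in> P" "B' \<in> P" "x \<in> B" "x \<in> B'"
  shows "B = B'"
  using assms by (meson disjointD disjoint_iff partition_onD2)

text \<open>Dropping one representative from each block leaves a basis of the span.\<close>
lemma dim_span_partition_zero_sums:
  fixes p :: "'a \<Rightarrow> 'v::real_vector"
  assumes A: "finite A" and P: "partition_on A P"
    and block_sum: "\<And>B. B \<in> P \<Longrightarrow> sum p B = 0"
    and relation_const: "\<And>c B i j. (\<Sum>k\<in>A. c k *\<^sub>R p k) = 0 \<Longrightarrow> B \<in> P \<Longrightarrow> i \<in> B \<Longrightarrow> j \<in> B \<Longrightarrow> c i = c j"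
  shows "dim (span (p ` A)) = card A - card P"
proof -
  obtain rep where rep: "\<And>B. B \<in> P \<Longrightarrow> rep B \<in> B"
    using partition_onD3[OF P] by (metis ex_in_conv)
  have rep_eq: "B' = B" if "B \<in> P" "B' \<in> P" "rep B' \<in> B" for B B'
    using partition_on_block_eq[OF P] rep that by blast
  have rep_inj: "inj_on rep P"
    by (rule inj_onI) (metis rep rep_eq)
  have reps_sub: "rep ` P \<subseteq> A"
    using rep partition_onD1[OF P] by blast
  define S where "S = A - rep ` P"
  have block_of: "\<exists>B\<in>P. k \<in> B" if "k \<in> A" for k
    using that partition_onD1[OF P] by blast
  have scalars_zero: "c k = 0" if c: "(\<Sum>i\<in>S. c i *\<^sub>R p i) = 0" and k: "k \<in> S" for c k
  proof -
    define c' where "c' i = (if i \<in> S then c i else 0)" for i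
    have "(\<Sum>i\<in>A. c' i *\<^sub>R p i) = (\<Sum>i\<in>S. c' i *\<^sub>R p i)"
      by (rule sum.mono_neutral_right) (auto simp: S_def c'_def A)
    also have "\<dots> = 0" using c by (simp add: c'_def)
    finally have c': "(\<Sum>i\<in>A. c' i *\<^sub>R p i) = 0" .
    obtain B where B: "B \<in> P" "k \<in> B" using block_of k by (auto simp: S_def)
    have "c' k = c' (rep B)" using relation_const[OF c' B] rep[OF B(1)] by blast
    thus "c k = 0" using k B(1) by (simp add: c'_def S_def)
  qed
  have p_inj: "inj_on p S"
  proof (rule inj_onI, rule ccontr)
    fix i j assume i: "i \<in> S" and j: "j \<in> S" and pij: "p i = p j" and "i \<noteq> j"
    define c where "c k = (if k = i then 1 else if k = j then -1 else (0::real))" for k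
    have "(\<Sum>k\<in>S. c k *\<^sub>R p k) = (\<Sum>k\<in>{i,j}. c k *\<^sub>R p k)"
      by (rule sum.mono_neutral_right) (use i j A in \<open>auto simp: c_def S_def\<close>)
    also have "\<dots> = 0" using \<open>i \<noteq> j\<close> pij by (simp add: c_def)
    finally show False using scalars_zero i by (fastforce simp: c_def)
  qed
  have indep: "independent (p ` S)"
  proof (rule independent_if_scalars_zero)
    show "finite (p ` S)" using A by (simp add: S_def)
    fix f x assume "(\<Sum>x\<in>p ` S. f x *\<^sub>R x) = 0" and x: "x \<in> p ` S"
    hence "(\<Sum>i\<in>S. f (p i) *\<^sub>R p i) = 0" by (simp add: sum.reindex[OF p_inj])
    thus "f x = 0" using scalars_zero[of "\<lambda>i. f (p i)"] x by auto
  qed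
  have rep_in_span: "p (rep B) \<in> span (p ` S)" if B: "B \<in> P" for B
  proof -
    have B_fin: "finite B" using B partition_onD1[OF P] finite_subset[OF _ A] by blast
    have "p (rep B) = - sum p (B - {rep B})"
      using block_sum[OF B] sum.remove[OF B_fin rep[OF B], of p] by (metis eq_neg_iff_add_eq_0)
    moreover have "sum p (B - {rep B}) \<in> span (p ` S)"
    proof (rule span_sum)
      fix k assume k: "k \<in> B - {rep B}"
      have "k \<notin> rep ` P" using k rep_eq B by blast
      moreover have "k \<in> A" using k B partition_onD1[OF P] by blast
      ultimately show "p k \<in> span (p ` S)" by (simp add: S_def span_base)
    qed
    ultimately show ?thesis by (simp add: span_neg)
  qed
  have "span (p ` A) = span (p ` S)"
    unfolding span_eq
  proof
    show "p ` A \<subseteq> span (p ` S)"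
      using rep_in_span by (auto simp: S_def intro: span_base)
    show "p ` S \<subseteq> span (p ` A)" by (auto simp: S_def intro: span_base)
  qed
  hence "dim (span (p ` A)) = card S"
    using dim_span_eq_card_independent[OF indep] card_image[OF p_inj] by simp
  also have "\<dots> = card A - card P"
    using card_Diff_subset[OF finite_subset[OF reps_sub A] reps_sub] card_image[OF rep_inj]
    by (simp add: S_def)
  finally show ?thesis .
qed

lemma partition_on_enumerate:
  assumes P: "partition_on A P" and fin: "finite P"
  shows "\<exists>I :: nat \<Rightarrow> 'a set.
           (\<forall>k\<in>{1..card P}. I k \<noteq> {}) \<and>
           (\<forall>k\<in>{1..card P}. \<forall>l\<in>{1..card P}. k \<noteq> l \<longrightarrow> I k \<inter> I l = {}) \<and>
           (\<Union>k\<in>{1..card P}. I k) = A \<and>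
           (\<forall>k\<in>{1..card P}. I k \<in> P)"
proof -
  obtain I where I: "bij_betw I {1..card P} P" using ex_bij_betw_nat_finite_1[OF fin] by blast
  have I_P: "I k \<in> P" if "k \<in> {1..card P}" for k using I that by (auto simp: bij_betw_def)
  show ?thesis
  proof (intro exI[of _ I] conjI ballI impI)
    fix k assume "k \<in> {1..card P}"
    thus "I k \<in> P" by (rule I_P)
    thus "I k \<noteq> {}" using partition_onD3[OF P] by metis
  next
    fix k l assume kl: "k \<in> {1..card P}" "l \<in> {1..card P}" "k \<noteq> l"
    show "I k \<inter> I l = {}"
    proof (rule disjointD[OF partition_onD2[OF P] I_P I_P])
      show "I k \<noteq> I l" by (meson I bij_betw_imp_inj_on inj_onD kl)
    qed (use kl in auto)
  next
    show "(\<Union>k\<in>{1..card P}. I k) = A" using I partition_onD1[OF P] by (simp add: bij_betw_def)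
  qed
qed

lemma zero_in_interior_nonneg_inner_imp_zero:
  fixes q :: "'a::real_inner"
  assumes "0 \<in> interior S" and nonneg: "\<And>x. x \<in> S \<Longrightarrow> 0 \<le> x \<bullet> q"
  shows "q = 0"
proof (rule ccontr)
  assume "q \<noteq> 0"
  obtain e where e: "e > 0" "ball 0 e \<subseteq> S" using assms(1) mem_interior by blast
  define x where "x = - (e / (2 * norm q)) *\<^sub>R q"
  have "norm x < e" using \<open>q \<noteq> 0\<close> e by (simp add: x_def)
  hence "0 \<le> x \<bullet> q" using e nonneg by auto
  moreover have "x \<bullet> q = - e * norm q / 2"
    using \<open>q \<noteq> 0\<close> by (simp add: x_def power2_norm_eq_inner[symmetric] power2_eq_square)
  moreover have "e * norm q > 0" using e \<open>q \<noteq> 0\<close> by simp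
  ultimately show False by linarith
qed

locale nef_vectors =
  fixes s :: nat and D :: "nat \<Rightarrow> (real ^ 'n) set" and p :: "nat \<Rightarrow> real ^ 'n"
  assumes pairing_nonneg: "\<And>i j y. i \<in> {1..s} \<Longrightarrow> j \<in> {1..s} \<Longrightarrow> i \<noteq> j \<Longrightarrow> y \<in> D j \<Longrightarrow> 0 \<le> y \<bullet> p i"
    and sum_p_zero: "(\<Sum>i\<in>{1..s}. p i) = 0"
    and zero_in_interior: "0 \<in> interior (minkowski_sum_family s D)"
begin

definition decoupled :: "nat set \<Rightarrow> bool" where
  "decoupled W \<longleftrightarrow> W \<subseteq> {1..s} \<and> (\<forall>j\<in>W. \<forall>i\<in>{1..s} - W. \<forall>y\<in>D j. y \<bullet> p i = 0)"

definition block :: "nat \<Rightarrow> nat set" where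
  "block i = \<Inter>{W. decoupled W \<and> i \<in> W}"

lemma pairing_sum_zero: "(\<Sum>i\<in>{1..s}. y \<bullet> p i) = 0"
  unfolding inner_sum_right[symmetric] sum_p_zero by simp

lemma sum_split_subset:
  fixes f :: "nat \<Rightarrow> 'b::ab_group_add"
  assumes "W \<subseteq> {1..s}"
  shows "(\<Sum>i\<in>{1..s}. f i) = (\<Sum>i\<in>{1..s} - W. f i) + (\<Sum>i\<in>W. f i)"
  using sum.subset_diff[OF assms] by simp

lemma sum_zero_imp_decoupled:
  assumes W: "W \<subseteq> {1..s}" and zero: "(\<Sum>i\<in>W. p i) = 0"
  shows "decoupled W"
  unfolding decoupled_def
proof (intro conjI W ballI)
  fix j i y assume j: "j \<in> W" and i: "i \<in> {1..s} - W" and y: "y \<in> D j"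
  have "(\<Sum>k\<in>{1..s} - W. p k) = 0" using sum_split_subset[OF W, of p] sum_p_zero zero by simp
  hence "(\<Sum>k\<in>{1..s} - W. y \<bullet> p k) = 0" by (simp add: inner_sum_right[symmetric])
  moreover have "\<And>k. k \<in> {1..s} - W \<Longrightarrow> 0 \<le> y \<bullet> p k"
    using j y W by (intro pairing_nonneg) auto
  ultimately show "y \<bullet> p i = 0"
    using i sum_nonneg_eq_0_iff[of "{1..s} - W" "\<lambda>k. y \<bullet> p k"] by auto
qed

text \<open>The sum of a decoupled family pairs nonnegatively with every summand of every point of
  the Minkowski sum, so it vanishes because the origin is an interior point.\<close>
lemma decoupled_imp_sum_zero:
  assumes "decoupled W" shows "(\<Sum>i\<in>W. p i) = 0"
proof (rule zero_in_interior_nonneg_inner_imp_zero[OF zero_in_interior])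
  have W: "W \<subseteq> {1..s}"
    and dec: "\<And>j i y. j \<in> W \<Longrightarrow> i \<in> {1..s} - W \<Longrightarrow> y \<in> D j \<Longrightarrow> y \<bullet> p i = 0"
    using assms unfolding decoupled_def by auto
  have summand_nonneg: "0 \<le> y \<bullet> (\<Sum>i\<in>W. p i)" if j: "j \<in> {1..s}" and y: "y \<in> D j" for j y
  proof (cases "j \<in> W")
    case True
    have "(\<Sum>i\<in>{1..s} - W. y \<bullet> p i) = 0" using dec[OF True] y by simp
    thus ?thesis
      using sum_split_subset[OF W, of "\<lambda>i. y \<bullet> p i"] pairing_sum_zero
      by (simp add: inner_sum_right)
  next
    case False
    show ?thesis unfolding inner_sum_right
      by (rule sum_nonneg, rule pairing_nonneg) (use W False j y in auto)
  qed
  fix x assume "x \<in> minkowski_sum_family s D"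
  then obtain y where x: "x = (\<Sum>j\<in>{1..s}. y j)" and y: "\<forall>j\<in>{1..s}. y j \<in> D j"
    unfolding minkowski_sum_family_def by auto
  show "0 \<le> x \<bullet> (\<Sum>i\<in>W. p i)"
    unfolding x inner_sum_left by (rule sum_nonneg) (use y summand_nonneg in auto)
qed

lemma decoupled_complement:
  assumes "decoupled W" shows "decoupled ({1..s} - W)"
proof -
  have W: "W \<subseteq> {1..s}" using assms decoupled_def by auto
  show ?thesis
    using sum_split_subset[OF W, of p] sum_p_zero decoupled_imp_sum_zero[OF assms]
    by (intro sum_zero_imp_decoupled) auto
qed

lemma decoupled_Int: "decoupled A \<Longrightarrow> decoupled B \<Longrightarrow> decoupled (A \<inter> B)"
  unfolding decoupled_def by blast

lemma decoupled_block: "i \<in> {1..s} \<Longrightarrow> decoupled (block i)"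
  unfolding block_def decoupled_def by blast

lemma block_subset: "decoupled W \<Longrightarrow> i \<in> W \<Longrightarrow> block i \<subseteq> W"
  unfolding block_def by auto

lemma mem_block: "i \<in> {1..s} \<Longrightarrow> i \<in> block i"
  unfolding block_def by (auto simp: decoupled_def)

lemma block_subset_indices: "i \<in> {1..s} \<Longrightarrow> block i \<subseteq> {1..s}"
  using decoupled_block decoupled_def by blast

lemma block_minimal:
  assumes i: "i \<in> {1..s}" and W: "decoupled W" "W \<subseteq> block i" "W \<noteq> {}"
  shows "W = block i"
proof (cases "i \<in> W")
  case True thus ?thesis using block_subset[OF W(1)] W(2) by auto
next
  case False
  have "decoupled (block i \<inter> ({1..s} - W))"
    using decoupled_Int[OF decoupled_block[OF i] decoupled_complement[OF W(1)]] .
  hence "block i \<subseteq> block i \<inter> ({1..s} - W)"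
    using False i mem_block by (intro block_subset) auto
  thus ?thesis using W by auto
qed

lemma block_eq:
  assumes i: "i \<in> {1..s}" and j: "j \<in> block i" shows "block j = block i"
proof -
  have "j \<in> {1..s}" using block_subset_indices[OF i] j by auto
  thus ?thesis
    using block_minimal[OF i decoupled_block] block_subset[OF decoupled_block[OF i] j] mem_block
    by blast
qed

lemma partition_on_blocks: "partition_on {1..s} (block ` {1..s})"
proof (rule partition_onI)
  show "\<Union>(block ` {1..s}) = {1..s}" using mem_block block_subset_indices by blast
  show "{} \<notin> block ` {1..s}" using mem_block by blast
  fix B B' assume "B \<in> block ` {1..s}" "B' \<in> block ` {1..s}" "B \<noteq> B'"
  thus "disjnt B B'" unfolding disjnt_def using block_eq by blast
qed

lemma decoupled_min_level:
  assumes rel: "(\<Sum>k\<in>{1..s}. c k *\<^sub>R p k) = 0"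
    and A: "decoupled A" and m: "\<And>k. k \<in> A \<Longrightarrow> m \<le> c k"
  shows "decoupled {k\<in>A. c k = m}"
  unfolding decoupled_def
proof (intro conjI ballI)
  show "{k\<in>A. c k = m} \<subseteq> {1..s}" using A decoupled_def by auto
  fix j i y assume j: "j \<in> {k\<in>A. c k = m}" and i: "i \<in> {1..s} - {k\<in>A. c k = m}" and y: "y \<in> D j"
  have outside: "y \<bullet> p k = 0" if "k \<in> {1..s} - A" for k
    using A j y that unfolding decoupled_def by auto
  have "(\<Sum>k\<in>{1..s}. c k * (y \<bullet> p k)) = 0"
    using arg_cong[OF rel, of "\<lambda>v. y \<bullet> v"] by (simp add: inner_sum_right)
  hence "(\<Sum>k\<in>{1..s}. (c k - m) * (y \<bullet> p k)) = 0"
    using pairing_sum_zero[of y]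
    by (simp add: left_diff_distrib sum_subtractf sum_distrib_left[symmetric])
  moreover have "0 \<le> (c k - m) * (y \<bullet> p k)" if k: "k \<in> {1..s}" for k
  proof (cases "k \<in> A \<and> k \<noteq> j")
    case True
    hence "0 \<le> y \<bullet> p k" using k A j y by (intro pairing_nonneg) (auto simp: decoupled_def)
    thus ?thesis using m True by simp
  qed (use j k outside in auto)
  ultimately have "(c i - m) * (y \<bullet> p i) = 0"
    using i sum_nonneg_eq_0_iff[of "{1..s}" "\<lambda>k. (c k - m) * (y \<bullet> p k)"] by auto
  thus "y \<bullet> p i = 0" using i outside by auto
qed

text \<open>Every linear relation among the vectors is constant on blocks: the indices of a block
  where the coefficient is minimal form a nonempty decoupled subset, hence the whole block.\<close>
lemma relation_const_on_block:
  assumes rel: "(\<Sum>k\<in>{1..s}. c k *\<^sub>R p k) = 0" and i: "i \<in> {1..s}" and j: "j \<in> block i"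
  shows "c j = c i"
proof -
  have fin: "finite (block i)" using block_subset_indices[OF i] finite_subset by blast
  define m where "m = Min (c ` block i)"
  have "m \<in> c ` block i" unfolding m_def using fin mem_block[OF i] by (intro Min_in) auto
  hence "{k\<in>block i. c k = m} \<noteq> {}" by auto
  moreover have "decoupled {k\<in>block i. c k = m}"
    using fin by (intro decoupled_min_level[OF rel decoupled_block[OF i]]) (simp add: m_def)
  ultimately have "{k\<in>block i. c k = m} = block i"
    using i by (intro block_minimal) auto
  thus ?thesis using j mem_block[OF i] by (metis (mono_tags, lifting) mem_Collect_eq)
qed

lemma dim_span_eq: "dim (span (p ` {1..s})) = s - card (block ` {1..s})"
proof -
  have "dim (span (p ` {1..s})) = card {1..s} - card (block ` {1..s})"
  proof (rule dim_span_partition_zero_sums[OF _ partition_on_blocks])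
    fix B assume "B \<in> block ` {1..s}"
    thus "sum p B = 0" using decoupled_imp_sum_zero[OF decoupled_block] by blast
  next
    fix c B i j assume rel: "(\<Sum>k\<in>{1..s}. c k *\<^sub>R p k) = 0"
      and "B \<in> block ` {1..s}" "i \<in> B" "j \<in> B"
    then obtain k where "k \<in> {1..s}" "i \<in> block k" "j \<in> block k" by blast
    thus "c i = c j" using relation_const_on_block[OF rel] by metis
  qed simp
  thus ?thesis by simp
qed

end

theorem lemma4p1:
  fixes \<Delta> :: "(real ^ 'n) set"
    and D N :: "nat \<Rightarrow> (real ^ 'n) set"
    and p :: "nat \<Rightarrow> real ^ 'n"
    and s r :: nat
  assumes "reflexive_polytope \<Delta>"
    and "aff_dim \<Delta> = int CARD('n)"
    and "nef_partition \<Delta> s D"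
    and "dual_nef_partition s D N"
    and "\<forall>i\<in>{1..s}. p i \<in> N i"
    and "(\<Sum>i\<in>{1..s}. p i) = 0"
    and "int (dim (span (p ` {1..s}))) = int s - int r"
  shows "\<exists>I :: nat \<Rightarrow> nat set.
           (\<forall>k\<in>{1..r}. I k \<noteq> {}) \<and>
           (\<forall>k\<in>{1..r}. \<forall>l\<in>{1..r}. k \<noteq> l \<longrightarrow> I k \<inter> I l = {}) \<and>
           (\<Union>k\<in>{1..r}. I k) = {1..s} \<and>
           (\<forall>k\<in>{1..r}. (\<Sum>i\<in>I k. p i) = 0)"
proof -
  interpret nef_vectors s D p
  proof
    fix i j y assume "i \<in> {1..s}" "j \<in> {1..s}" "i \<noteq> j" "y \<in> D j"
    thus "0 \<le> y \<bullet> p i" using assms(4,5) unfolding dual_nef_partition_def by fastforce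
  next
    show "0 \<in> interior (minkowski_sum_family s D)"
      using assms(1,3) unfolding reflexive_polytope_def nef_partition_def by auto
  qed (rule assms(6))
  have "card (block ` {1..s}) \<le> s" using card_image_le[of "{1..s}" block] by simp
  hence blocks: "card (block ` {1..s}) = r" using dim_span_eq assms(7) by linarith
  obtain I where "\<forall>k\<in>{1..r}. I k \<noteq> {}"
    "\<forall>k\<in>{1..r}. \<forall>l\<in>{1..r}. k \<noteq> l \<longrightarrow> I k \<inter> I l = {}"
    "(\<Union>k\<in>{1..r}. I k) = {1..s}" and I_blocks: "\<forall>k\<in>{1..r}. I k \<in> block ` {1..s}"
    using partition_on_enumerate[OF partition_on_blocks finite_imageI, unfolded blocks] by blast
  moreover have "\<forall>k\<in>{1..r}. (\<Sum>i\<in>I k. p i) = 0"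
    using I_blocks decoupled_imp_sum_zero[OF decoupled_block] by fastforce
  ultimately show ?thesis by blast
qed

end
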